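(* Let $r$ be a positive integer and let $x\in\{0,1\}^\omega$ be an $r$-power free Sturmian word. Then for every infinite sequence $V_0,V_1,V_2,\dots$ of words $V_i\in\{0,1\}^+$ there exist $k\ge1$, indices $0\le n_1<n_2<\cdots<n_k$ and a permutation $\sigma$ of $\{1,\dots,k\}$ such that $V_{n_{\sigma(1)}}V_{n_{\sigma(2)}}\cdots V_{n_{\sigma(k)}}\notin\mathrm{Fact}(x)$.
   Context: $\mathrm{Fact}(x)$ is the set of non-empty finite factors $x_ix_{i+1}\cdots x_{i+j}$ ($i,j\ge0$) of $x=x_0x_1\cdots$. A word $x\in\{0,1\}^\omega$ is Sturmian if it is aperiodic (no suffix of $x$ is of the form $u^\omega=uuu\cdots$ with $u$ non-empty) and balanced: for all factors $u,v$ of $x$ with $|u|=|v|$ and each letter $a\in\{0,1\}$, $\big||u|_a-|v|_a\big|\le1$, where $|u|_a$ is the number of occurrences of $a$ in $u$. A word $x$ is $r$-power free if $u^r\notin\mathrm{Fact}(x)$ for every $u\in\mathrm{Fact}(x)$, where $u^r$ denotes $u$ concatenated with itself $r$ times. *)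

theory Defs
  imports Main
begin

text \<open>Infinite words over the alphabet {0,1} are functions nat => nat with values in {0,1};
finite words are lists of nat.\<close>

definition binary_word :: "(nat \<Rightarrow> nat) \<Rightarrow> bool" where
  "binary_word x \<longleftrightarrow> (\<forall>i. x i \<in> {0,1})"

definition Fact :: "(nat \<Rightarrow> nat) \<Rightarrow> nat list set" where
  "Fact x = {map x [i..<i + j + 1] | i j. True}"

definition aperiodic :: "(nat \<Rightarrow> nat) \<Rightarrow> bool" where
  "aperiodic x \<longleftrightarrow>
     \<not> (\<exists>u m. u \<noteq> [] \<and> (\<forall>n. x (m + n) = u ! (n mod length u)))"

definition balanced :: "(nat \<Rightarrow> nat) \<Rightarrow> bool" where
  "balanced x \<longleftrightarrow>
     (\<forall>u \<in> Fact x. \<forall>v \<in> Fact x. length u = length v \<longrightarrow>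
        (\<forall>a \<in> {0::nat, 1}. \<bar>int (count_list u a) - int (count_list v a)\<bar> \<le> 1))"

definition sturmian :: "(nat \<Rightarrow> nat) \<Rightarrow> bool" where
  "sturmian x \<longleftrightarrow> binary_word x \<and> aperiodic x \<and> balanced x"

definition power_free :: "nat \<Rightarrow> (nat \<Rightarrow> nat) \<Rightarrow> bool" where
  "power_free r x \<longleftrightarrow> (\<forall>u \<in> Fact x. concat (replicate r u) \<notin> Fact x)"

end

theory Submission imports Defs "HOL-Library.Infinite_Set" begin

text \<open>
Suppose every permuted concatenation of the \<open>V\<^sub>i\<close> is a factor of \<open>x\<close>. If infinitely
many \<open>V\<^sub>i\<close> are short, one word \<open>y\<close> equals \<open>V\<^sub>i\<close> for infinitely many \<open>i\<close>, and then
\<open>y\<^sup>r\<close> is a factor. Otherwise there are long \<open>W = V\<^sub>i\<close>, \<open>Z = V\<^sub>l\<close> (\<open>0 < i < l\<close>) such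
that both \<open>W Z\<close> and \<open>W U Z\<close> are factors, where \<open>U = V\<^sub>0\<close>.

In a balanced word the weight (number of 1s) of a factor of length \<open>n\<close> is \<open>L(n)\<close> or
\<open>L(n) + 1\<close>, and \<open>r\<close>-power-freeness makes both values occur among any \<open>r n + 1\<close>
consecutive starting positions. Comparing windows of \<open>W Z\<close> and \<open>W U Z\<close> that straddle
the insertion point yields \<open>L(n + |U|) = |U|\<^sub>1 + L(n)\<close>, so \<open>L(m |U|)\<close> is affine in \<open>m\<close>.
By pigeonhole, two windows of length \<open>|U|\<close> whose weight differs from \<open>|U|\<^sub>1\<close> lie a
multiple of \<open>|U|\<close> apart, and the window they bound then violates this formula.
\<close>

definition weight :: "(nat \<Rightarrow> nat) \<Rightarrow> nat \<Rightarrow> nat \<Rightarrow> nat" where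
  "weight x i n = (\<Sum>j<n. x (i + j))"

lemma weight_0 [simp]: "weight x i 0 = 0"
  by (simp add: weight_def)

lemma weight_add: "weight x i (m + n) = weight x i m + weight x (i + m) n"
  by (induct n) (simp_all add: weight_def add.assoc)

lemma weight_Suc: "weight x i (Suc n) = weight x i n + x (i + n)"
  by (simp add: weight_def)

lemma weight_Suc_left: "weight x i (Suc n) = x i + weight x (Suc i) n"
  using weight_add[of x i 1 n] by (simp add: weight_def)

lemma weight_cong: "(\<And>j. j < n \<Longrightarrow> x (a + j) = x (b + j)) \<Longrightarrow> weight x a n = weight x b n"
  by (simp add: weight_def)

lemma count_list_map_upt_eq_weight:
  assumes "\<forall>i. x i \<in> {0, 1}"
  shows "count_list (map x [i..<i + n]) 1 = weight x i n"
proof (induct n)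
  case (Suc n)
  have "x (i + n) \<in> {0, 1}" using assms by blast
  then show ?case using Suc by (auto simp: weight_Suc)
qed simp

lemma map_upt_in_Fact: "n \<ge> 1 \<Longrightarrow> map x [i..<i + n] \<in> Fact x"
  unfolding Fact_def by (rule CollectI, rule exI[of _ i], rule exI[of _ "n - 1"]) simp

lemma FactE:
  assumes "w \<in> Fact x"
  obtains i where "w = map x [i..<i + length w]"
  using assms unfolding Fact_def by auto

lemma nth_factor: "map x [i..<i + length w] = w \<Longrightarrow> j < length w \<Longrightarrow> x (i + j) = w ! j"
  by (metis add_diff_cancel_left' length_map length_upt nth_map_upt)

lemma concat_replicate_snoc: "concat (replicate m u) @ u = concat (replicate (Suc m) u)"
  by (induct m) simp_all

subsection \<open>Weights of windows in a balanced word\<close>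

lemma balanced_weight_le:
  assumes "balanced x" "\<forall>i. x i \<in> {0, 1}"
  shows "weight x i n \<le> weight x j n + 1"
proof (cases "n = 0")
  case False
  then have "map x [i..<i + n] \<in> Fact x" "map x [j..<j + n] \<in> Fact x"
    by (auto intro: map_upt_in_Fact)
  with assms(1) have
    "\<bar>int (count_list (map x [i..<i + n]) 1) - int (count_list (map x [j..<j + n]) 1)\<bar> \<le> 1"
    unfolding balanced_def by auto
  then show ?thesis using count_list_map_upt_eq_weight[OF assms(2)] by simp
qed simp

definition min_weight :: "(nat \<Rightarrow> nat) \<Rightarrow> nat \<Rightarrow> nat" where
  "min_weight x n = (LEAST v. \<exists>i. weight x i n = v)"

lemma min_weight_le: "min_weight x n \<le> weight x i n"
  unfolding min_weight_def by (rule Least_le) blast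

lemma min_weight_attained: "\<exists>i. weight x i n = min_weight x n"
  unfolding min_weight_def by (rule LeastI_ex) blast

lemma balanced_weight_le_min_weight:
  assumes "balanced x" "\<forall>i. x i \<in> {0, 1}"
  shows "weight x i n \<le> min_weight x n + 1"
proof -
  obtain j where "weight x j n = min_weight x n" using min_weight_attained by blast
  with balanced_weight_le[OF assms, of i n j] show ?thesis by simp
qed

lemma balanced_weight_mult_bounds:
  assumes "balanced x" "\<forall>i. x i \<in> {0, 1}"
  shows "m * min_weight x d \<le> weight x i (m * d) \<and> weight x i (m * d) \<le> m * min_weight x d + m"
proof (induct m arbitrary: i)
  case (Suc m)
  have "weight x i (Suc m * d) = weight x i d + weight x (i + d) (m * d)"
    using weight_add[of x i d "m * d"] by simp
  moreover have "min_weight x d \<le> weight x i d" "weight x i d \<le> min_weight x d + 1"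
    using min_weight_le balanced_weight_le_min_weight[OF assms] by auto
  ultimately show ?case using Suc[of "i + d"] by simp
qed simp

subsection \<open>Power-freeness forces both weights to occur\<close>

lemma map_upt_eq_concat_replicate:
  assumes "\<And>t. t < m * n \<Longrightarrow> x (i + t + n) = x (i + t)"
  shows "map x [i..<i + m * n] = concat (replicate m (map x [i..<i + n]))"
  using assms
proof (induct m)
  case (Suc m)
  note per = Suc.prems
  have shift: "x (i + k * n + j) = x (i + j)" if "k \<le> m" "j < n" for k j
    using that
  proof (induct k)
    case (Suc k)
    have "k * n + j < Suc m * n"
      using Suc.prems mult_le_mono1[of "Suc k" m n] by simp
    then have "x (i + (k * n + j) + n) = x (i + (k * n + j))" by (rule per)
    then show ?case using Suc by (simp add: algebra_simps)
  qed simp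
  have "[i..<i + Suc m * n] = [i..<i + m * n] @ [i + m * n..<i + m * n + n]"
    using upt_add_eq_append[of i "i + m * n" n] by (simp add: add.assoc add.commute[of n])
  moreover have "map x [i + m * n..<i + m * n + n] = map x [i..<i + n]"
    by (rule nth_equalityI) (simp_all add: shift)
  moreover have "map x [i..<i + m * n] = concat (replicate m (map x [i..<i + n]))"
    using Suc by simp
  ultimately show ?case by (simp add: concat_replicate_snoc del: replicate_Suc)
qed simp

lemma power_free_weight_not_constant:
  assumes pf: "power_free r x" and r: "r > 0" and n: "n \<ge> 1"
  shows "\<exists>t \<le> r * n. weight x (i + t) n \<noteq> weight x i n"
proof (rule ccontr)
  assume "\<not> ?thesis"
  then have const: "\<And>t. t \<le> r * n \<Longrightarrow> weight x (i + t) n = weight x i n" by blast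
  \<comment> \<open>equal weights of consecutive windows mean that the letters entering and leaving agree\<close>
  have per: "x (i + t + n) = x (i + t)" if "t < r * n" for t
    using const[of t] const[of "Suc t"] that weight_Suc[of x "i + t" n] weight_Suc_left[of x "i + t" n]
    by simp
  have "map x [i..<i + r * n] = concat (replicate r (map x [i..<i + n]))"
    using map_upt_eq_concat_replicate[OF per] .
  moreover have "map x [i..<i + n] \<in> Fact x" "map x [i..<i + r * n] \<in> Fact x"
    using n r by (auto intro: map_upt_in_Fact)
  ultimately show False using pf unfolding power_free_def by auto
qed

lemma power_free_balanced_weight_attained:
  assumes "power_free r x" "r > 0" "n \<ge> 1" "balanced x" "\<forall>i. x i \<in> {0, 1}"
    and v: "v = min_weight x n \<or> v = min_weight x n + 1"
  shows "\<exists>t \<le> r * n. weight x (i + t) n = v"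
proof -
  have two_values: "weight x j n = min_weight x n \<or> weight x j n = min_weight x n + 1" for j
    using min_weight_le[of x n j] balanced_weight_le_min_weight[OF assms(4,5), of j n] by linarith
  obtain t where "t \<le> r * n" "weight x (i + t) n \<noteq> weight x i n"
    using power_free_weight_not_constant[OF assms(1-3)] by blast
  then show ?thesis using two_values[of i] two_values[of "i + t"] v by (metis add_0_right le0)
qed

subsection \<open>Inserting a factor into a long factor\<close>

text \<open>The factor \<open>W Z\<close> starts at \<open>p\<close> and \<open>W U Z\<close> at \<open>q\<close>, with \<open>|W| = a\<close>, \<open>|Z| = b\<close>, \<open>|U| = d\<close>.\<close>

locale insertion =
  fixes x :: "nat \<Rightarrow> nat" and r p q a b d :: nat
  assumes bal: "balanced x" and bin: "\<forall>i. x i \<in> {0, 1}" and pf: "power_free r x" and r: "r > 0"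
    and d: "d \<ge> 1"
    and prefix_match: "\<And>j. j < a \<Longrightarrow> x (p + j) = x (q + j)"
    and suffix_match: "\<And>j. j < b \<Longrightarrow> x (p + a + j) = x (q + a + d + j)"
begin

definition inserted_weight :: nat where
  "inserted_weight = weight x (q + a) d"

text \<open>The windows of length \<open>d + f + s + g\<close> at \<open>p + e\<close> in \<open>W Z\<close> and at \<open>q + e + d + f\<close> in \<open>W U Z\<close>
  share the last \<open>s\<close> letters of \<open>W\<close> and the first \<open>g\<close> letters of \<open>Z\<close>; balance compares the rest.\<close>

lemma weight_straddle:
  assumes "e + d + f + s = a" "g + f \<le> b"
  shows "weight x (p + e) (d + f) \<le> inserted_weight + weight x (p + a + g) f + 1
    \<and> inserted_weight + weight x (p + a + g) f \<le> weight x (p + e) (d + f) + 1"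
proof -
  define n where "n = d + f + s + g"
  have "weight x (p + e) n = weight x (p + e) (d + f) + weight x (p + e + d + f) (s + g)"
    using weight_add[of x "p + e" "d + f" "s + g"] by (simp add: n_def add.assoc)
  also have "weight x (p + e + d + f) (s + g) = weight x (p + e + d + f) s + weight x (p + a) g"
    using weight_add[of x "p + e + d + f" s g] assms(1) by (simp add: add.assoc)
  finally have in_WZ:
    "weight x (p + e) n = weight x (p + e) (d + f) + weight x (p + e + d + f) s + weight x (p + a) g"
    by simp
  have "weight x (q + e + d + f) n
      = weight x (q + e + d + f) s + weight x (q + e + d + f + s) (d + (g + f))"
    using weight_add[of x "q + e + d + f" s "d + (g + f)"] by (simp add: n_def ac_simps)
  also have "q + e + d + f + s = q + a" using assms(1) by simp
  also have "weight x (q + a) (d + (g + f))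
      = inserted_weight + weight x (q + a + d) g + weight x (q + a + d + g) f"
    using weight_add[of x "q + a" d "g + f"] weight_add[of x "q + a + d" g f]
    by (simp add: inserted_weight_def)
  finally have in_WUZ: "weight x (q + e + d + f) n = weight x (q + e + d + f) s + inserted_weight
      + weight x (q + a + d) g + weight x (q + a + d + g) f"
    by simp
  have "weight x (q + e + d + f) s = weight x (p + e + d + f) s"
    by (rule weight_cong) (metis prefix_match add.assoc assms(1) add_less_cancel_left)
  moreover have "weight x (q + a + d) g = weight x (p + a) g"
    by (rule weight_cong) (use suffix_match assms(2) in auto)
  moreover have "weight x (q + a + d + g) f = weight x (p + a + g) f"
    by (rule weight_cong) (use suffix_match[of "g + _"] assms(2) in \<open>auto simp: add.assoc\<close>)
  moreover have "weight x (p + e) n \<le> weight x (q + e + d + f) n + 1"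
    "weight x (q + e + d + f) n \<le> weight x (p + e) n + 1"
    using balanced_weight_le[OF bal bin] by auto
  ultimately show ?thesis using in_WZ in_WUZ by simp
qed

lemma min_weight_add_inserted:
  assumes f: "f \<ge> 1" and long_W: "(r + 1) * (d + f) \<le> a" and long_Z: "(r + 1) * f \<le> b"
  shows "min_weight x (d + f) = inserted_weight + min_weight x f"
proof -
  have df: "d + f \<ge> 1" using f by simp
  have attained: "\<exists>t \<le> r * n. weight x (i + t) n = v"
    if "n \<ge> 1" "v = min_weight x n \<or> v = min_weight x n + 1" for i n v
    using power_free_balanced_weight_attained[OF pf r that(1) bal bin that(2)] .
  obtain g1 where g1: "g1 \<le> r * f" "weight x (p + a + g1) f = min_weight x f"
    using attained[OF f] by blast
  obtain g2 where g2: "g2 \<le> r * f" "weight x (p + a + g2) f = min_weight x f + 1"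
    using attained[OF f] by blast
  \<comment> \<open>a light \<open>(d + f)\<close>-window at the end of \<open>W\<close> against a heavy \<open>f\<close>-window at the start of \<open>Z\<close>, and vice versa\<close>
  define i0 where "i0 = a - (r + 1) * (d + f)"
  obtain t1 where t1: "t1 \<le> r * (d + f)" "weight x (p + i0 + t1) (d + f) = min_weight x (d + f)"
    using attained[OF df] by blast
  obtain t2 where t2: "t2 \<le> r * (d + f)" "weight x (p + i0 + t2) (d + f) = min_weight x (d + f) + 1"
    using attained[OF df] by blast
  have "weight x (p + (i0 + t1)) (d + f) \<le> inserted_weight + weight x (p + a + g2) f + 1
      \<and> inserted_weight + weight x (p + a + g2) f \<le> weight x (p + (i0 + t1)) (d + f) + 1"
    by (rule weight_straddle[where s = "r * (d + f) - t1"])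
      (use long_W long_Z g2 t1 in \<open>simp_all add: i0_def algebra_simps\<close>)
  moreover have "weight x (p + (i0 + t2)) (d + f) \<le> inserted_weight + weight x (p + a + g1) f + 1
      \<and> inserted_weight + weight x (p + a + g1) f \<le> weight x (p + (i0 + t2)) (d + f) + 1"
    by (rule weight_straddle[where s = "r * (d + f) - t2"])
      (use long_W long_Z g1 t2 in \<open>simp_all add: i0_def algebra_simps\<close>)
  ultimately show ?thesis using g1 g2 t1 t2 by (simp add: add.assoc)
qed

definition span :: nat where
  "span = (d + 1) * (r * d + 1)"

lemma min_weight_mult_inserted:
  assumes long_W: "(r + 1) * (d + span) \<le> a" and long_Z: "(r + 1) * span \<le> b"
    and "(m + 1) * d \<le> span"
  shows "min_weight x ((m + 2) * d) = (m + 1) * inserted_weight + min_weight x d"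
  using assms(3)
proof (induct m)
  case 0
  have "(r + 1) * (d + d) \<le> a" using 0 le_trans[OF mult_le_mono2 long_W] by simp
  moreover have "(r + 1) * d \<le> b" using 0 le_trans[OF mult_le_mono2 long_Z] by simp
  ultimately show ?case using min_weight_add_inserted[OF d] by (simp add: mult_2)
next
  case (Suc m)
  have le: "(m + 2) * d \<le> span" using Suc.prems by simp
  have "(r + 1) * (d + (m + 2) * d) \<le> a" using le le_trans[OF mult_le_mono2 long_W] by simp
  moreover have "(r + 1) * ((m + 2) * d) \<le> b" using le_trans[OF mult_le_mono2[OF le] long_Z] .
  ultimately have "min_weight x (d + (m + 2) * d) = inserted_weight + min_weight x ((m + 2) * d)"
    using min_weight_add_inserted d by simp
  moreover have "d + (m + 2) * d = (Suc m + 2) * d" by simp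
  ultimately show ?case using Suc.hyps le by simp
qed

lemma equal_weights_multiple_apart:
  assumes "v = min_weight x d \<or> v = min_weight x d + 1"
  shows "\<exists>i t. t \<ge> 1 \<and> t * d \<le> span \<and> weight x i d = v \<and> weight x (i + t * d) d = v"
proof -
  have "\<exists>t. t \<le> r * d \<and> weight x (k * (r * d + 1) + t) d = v" for k
    using power_free_balanced_weight_attained[OF pf r d bal bin assms] by blast
  then obtain s where s: "\<And>k. s k \<le> r * d" "\<And>k. weight x (k * (r * d + 1) + s k) d = v"
    by metis
  \<comment> \<open>one window of weight \<open>v\<close> in each block of \<open>r d + 1\<close> positions; two of the first \<open>d + 1\<close> agree mod \<open>d\<close>\<close>
  define y where "y k = k * (r * d + 1) + s k" for k
  have y_mono: "y k < y k'" if "k < k'" for k k'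
  proof -
    have "y k < (k + 1) * (r * d + 1)" using s(1)[of k] by (simp add: y_def)
    also have "\<dots> \<le> k' * (r * d + 1)" using that by (intro mult_le_mono1) simp
    finally show ?thesis by (simp add: y_def)
  qed
  have "card ((\<lambda>k. y k mod d) ` {0..d}) \<le> card {..<d}"
    by (rule card_mono) (use d in auto)
  then have "\<not> inj_on (\<lambda>k. y k mod d) {0..d}"
    by (intro pigeonhole) simp
  then obtain k1 k2 where k: "k2 \<le> d" "k1 < k2" "y k1 mod d = y k2 mod d"
    unfolding inj_on_def by (metis atLeastAtMost_iff linorder_neqE_nat)
  obtain t where t: "y k2 = y k1 + d * t"
    using mod_eq_nat1E[of "y k2" d "y k1"] k(3) y_mono[OF k(2)] by auto
  have "t \<ge> 1" using t y_mono[OF k(2)] by (cases t) auto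
  moreover have "t * d \<le> span"
  proof -
    have "t * d \<le> y k2" using t by simp
    also have "\<dots> \<le> d * (r * d + 1) + r * d"
      using k(1) mult_le_mono1[of k2 d "r * d + 1"] s(1)[of k2] by (simp add: y_def)
    also have "\<dots> \<le> span" unfolding span_def by simp
    finally show ?thesis .
  qed
  ultimately show ?thesis using s(2)[of k1] s(2)[of k2] t unfolding y_def by (metis mult.commute)
qed

lemma long_insertion_impossible:
  assumes long_W: "(r + 1) * (d + span) \<le> a" and long_Z: "(r + 1) * span \<le> b"
  shows False
proof -
  let ?L = "min_weight x d" and ?c = inserted_weight
  have c: "?L \<le> ?c" "?c \<le> ?L + 1"
    unfolding inserted_weight_def using min_weight_le balanced_weight_le_min_weight[OF bal bin] by auto
  define v where "v = (if ?c = ?L then ?L + 1 else ?L)"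
  obtain i t where it: "t \<ge> 1" "t * d \<le> span" "weight x i d = v" "weight x (i + t * d) d = v"
    using equal_weights_multiple_apart[of v] unfolding v_def by (metis (full_types))
  then obtain m where m: "t = m + 1" by (metis add.commute le_Suc_ex)
  have L: "min_weight x ((m + 2) * d) = (m + 1) * ?c + ?L"
    using min_weight_mult_inserted[OF long_W long_Z] it(2) m by simp
  have "weight x i ((m + 2) * d) = weight x i (d + (m * d + d))"
    by (rule arg_cong[where f = "weight x i"]) simp
  also have "\<dots> = weight x i d + weight x (i + d) (m * d) + weight x (i + d + m * d) d"
    unfolding weight_add by (simp only: add.assoc)
  finally have "weight x i ((m + 2) * d)
      = weight x i d + weight x (i + d) (m * d) + weight x (i + d + m * d) d" .
  moreover have "weight x (i + d + m * d) d = v" using it(4) m by (simp add: algebra_simps)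
  ultimately have total: "weight x i ((m + 2) * d) = 2 * v + weight x (i + d) (m * d)"
    using it(3) by simp
  have middle: "m * ?L \<le> weight x (i + d) (m * d)" "weight x (i + d) (m * d) \<le> m * ?L + m"
    using balanced_weight_mult_bounds[OF bal bin] by auto
  have enclosing: "(m + 1) * ?c + ?L \<le> weight x i ((m + 2) * d)"
    "weight x i ((m + 2) * d) \<le> (m + 1) * ?c + ?L + 1"
    using min_weight_le[of x "(m + 2) * d" i]
      balanced_weight_le_min_weight[OF bal bin, of i "(m + 2) * d"]
    unfolding L by simp_all
  show False
  proof (cases "?c = ?L")
    case True
    then show False using total middle enclosing by (simp add: v_def algebra_simps)
  next
    case False
    then have "?c = ?L + 1" "v = ?L" using c by (auto simp: v_def)
    then show False using total middle enclosing by (simp add: algebra_simps)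
  qed
qed

end

lemma factor_insertion_impossible:
  assumes "balanced x" "\<forall>i. x i \<in> {0, 1}" "power_free r x" "r > 0"
    and WZ: "W @ Z \<in> Fact x" and WUZ: "W @ U @ Z \<in> Fact x" and "U \<noteq> []"
    and long: "(r + 1) * (length U + (length U + 1) * (r * length U + 1)) \<le> length W"
      "(r + 1) * (length U + (length U + 1) * (r * length U + 1)) \<le> length Z"
  shows False
proof -
  obtain p where p: "W @ Z = map x [p..<p + length (W @ Z)]" using WZ by (rule FactE)
  obtain q where q: "W @ U @ Z = map x [q..<q + length (W @ U @ Z)]" using WUZ by (rule FactE)
  interpret insertion x r p q "length W" "length Z" "length U"
  proof
    show "length U \<ge> 1" using \<open>U \<noteq> []\<close> by (simp add: Suc_leI)
    show "x (p + j) = x (q + j)" if "j < length W" for j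
      using nth_factor[OF p[symmetric], of j] nth_factor[OF q[symmetric], of j] that
      by (simp add: nth_append)
    show "x (p + length W + j) = x (q + length W + length U + j)" if "j < length Z" for j
      using nth_factor[OF p[symmetric], of "length W + j"]
        nth_factor[OF q[symmetric], of "length W + length U + j"] that
      by (simp add: nth_append add.assoc)
  qed (use assms in auto)
  have "(r + 1) * span \<le> (r + 1) * (length U + span)" by (rule mult_le_mono2) simp
  then show False using long_insertion_impossible long unfolding span_def by linarith
qed

subsection \<open>Permuted concatenations\<close>

definition permuted_concats_in_Fact :: "(nat \<Rightarrow> nat) \<Rightarrow> (nat \<Rightarrow> nat list) \<Rightarrow> bool" where
  "permuted_concats_in_Fact x V \<longleftrightarrow> (\<forall>k \<ge> 1. \<forall>n. strict_mono_on {1..k} n \<longrightarrow>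
     (\<forall>\<sigma>. bij_betw \<sigma> {1..k} {1..k} \<longrightarrow> concat (map (\<lambda>j. V (n (\<sigma> j))) [1..<k + 1]) \<in> Fact x))"

context
  fixes x V assumes H: "permuted_concats_in_Fact x V"
begin

lemma permuted_concats_single: "V i \<in> Fact x"
  using H[unfolded permuted_concats_in_Fact_def, rule_format, of 1 "\<lambda>_. i" id]
  by (simp add: strict_mono_on_def)

lemma permuted_concats_pair:
  assumes "i < l" shows "V i @ V l \<in> Fact x"
proof -
  have "[1..<2 + 1] = [1, 2::nat]" by (simp add: upt_rec)
  then show ?thesis
    using H[unfolded permuted_concats_in_Fact_def, rule_format,
        of 2 "\<lambda>j. if j = 1 then i else l" id] assms
    by (simp add: strict_mono_on_def)
qed

lemma permuted_concats_insert:
  assumes "0 < i" "i < l" shows "V i @ V 0 @ V l \<in> Fact x"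
proof -
  let ?n = "\<lambda>j::nat. if j = 1 then 0 else if j = 2 then i else l"
  let ?\<sigma> = "\<lambda>j::nat. if j = 1 then 2 else if j = 2 then 1 else j"
  have "{1..3::nat} = {1, 2, 3}" by auto
  then have "bij_betw ?\<sigma> {1..3} {1..3}" unfolding bij_betw_def inj_on_def by auto
  moreover have "strict_mono_on {1..3} ?n" using assms by (auto simp: strict_mono_on_def)
  moreover have "[1..<3 + 1] = [1, 2, 3::nat]" by (simp add: upt_rec)
  ultimately show ?thesis
    using H[unfolded permuted_concats_in_Fact_def, rule_format, of 3 ?n ?\<sigma>] by simp
qed

lemma permuted_concats_repeat:
  assumes "infinite (V -` {y})" "k \<ge> 1" shows "concat (replicate k y) \<in> Fact x"
proof -
  let ?n = "enumerate (V -` {y})"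
  have "strict_mono_on {1..k} ?n"
    using strict_mono_enumerate[OF assms(1)] by (simp add: strict_mono_def strict_mono_on_def)
  then have "concat (map (\<lambda>j. V (?n (id j))) [1..<k + 1]) \<in> Fact x"
    using H[unfolded permuted_concats_in_Fact_def, rule_format, of k ?n id] assms(2) by simp
  moreover have "map (\<lambda>j. V (?n (id j))) [1..<k + 1] = map (\<lambda>_. y) [1..<k + 1]"
    using enumerate_in_set[OF assms(1)] by simp
  also have "\<dots> = replicate k y" by (simp only: map_replicate_const) simp
  ultimately show ?thesis by (simp only:)
qed

end

lemma power_free_permuted_concats_finite_short:
  assumes H: "permuted_concats_in_Fact x V" and pf: "power_free r x" and "r > 0"
    and "finite A" and "\<forall>i. set (V i) \<subseteq> A"
  shows "finite {i. length (V i) < N}"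
proof (rule ccontr)
  let ?J = "{i. length (V i) < N}"
  assume "infinite ?J"
  have "V ` ?J \<subseteq> {xs. set xs \<subseteq> A \<and> length xs \<le> N}" using assms(5) by auto
  then have "finite (V ` ?J)" using finite_lists_length_le[OF assms(4)] finite_subset by blast
  then obtain y where y: "infinite (V -` {y})" using inf_img_fin_dom \<open>infinite ?J\<close> by blast
  then obtain i where "V i = y" using infinite_imp_nonempty by blast
  then have "y \<in> Fact x" using permuted_concats_single[OF H, of i] by simp
  moreover have "concat (replicate r y) \<in> Fact x"
    using permuted_concats_repeat[OF H y] assms(3) by simp
  ultimately show False using pf unfolding power_free_def by blast
qed

theorem lemma2p4:
  fixes r :: nat and x :: "nat \<Rightarrow> nat" and V :: "nat \<Rightarrow> nat list"
  assumes "r > 0"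
    and "sturmian x"
    and "power_free r x"
    and "\<forall>i. V i \<noteq> [] \<and> set (V i) \<subseteq> {0, 1}"
  shows "\<exists>k \<ge> 1. \<exists>n :: nat \<Rightarrow> nat. strict_mono_on {1..k} n \<and>
           (\<exists>\<sigma> :: nat \<Rightarrow> nat. bij_betw \<sigma> {1..k} {1..k} \<and>
              concat (map (\<lambda>j. V (n (\<sigma> j))) [1..<k + 1]) \<notin> Fact x)"
proof (rule ccontr)
  assume "\<not> ?thesis"
  then have H: "permuted_concats_in_Fact x V" unfolding permuted_concats_in_Fact_def by blast
  have bin: "\<forall>i. x i \<in> {0, 1}" and bal: "balanced x"
    using assms(2) unfolding sturmian_def binary_word_def by auto
  define N where "N = (r + 1) * (length (V 0) + (length (V 0) + 1) * (r * length (V 0) + 1))"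
  have "finite {i. length (V i) < N}"
    using power_free_permuted_concats_finite_short[OF H assms(3,1), of "{0, 1}"] assms(4) by blast
  then have "infinite (UNIV - {i. length (V i) < N})"
    using Diff_infinite_finite infinite_UNIV_nat by blast
  then have long: "infinite {i. N \<le> length (V i)}" by (simp add: set_diff_eq not_less)
  then obtain i where i: "0 < i" "N \<le> length (V i)" by (metis infinite_nat_iff_unbounded mem_Collect_eq)
  from long obtain l where l: "i < l" "N \<le> length (V l)"
    by (metis infinite_nat_iff_unbounded mem_Collect_eq)
  have "V 0 \<noteq> []" using assms(4) by blast
  then show False
    using factor_insertion_impossible[OF bal bin assms(3,1) permuted_concats_pair[OF H l(1)]
        permuted_concats_insert[OF H i(1) l(1)] _ i(2)[unfolded N_def] l(2)[unfolded N_def]]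
    by blast
qed

end
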